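(* Let $p(\cdot)$ be a probability measure on the nonnegative integers with $p(i)>0$ for all $i$, and let $a>0$ be the parameter of the penalty $L_a$ to be minimized. Suppose there is a nonnegative integer $r$ such that for all $j>r$ and all $i<j$, $$p(i)\ge p(j)\qquad\text{and}\qquad p(i)\ge \sum_{k=j+1}^\infty p(k)\,a^{k-j}.$$ Then there exists a minimum-penalty binary prefix code in which, for some fixed nonnegative integer $x$, every codeword $j>r$ consists of $j-x$ ones followed by one zero.
   Context: A binary prefix code for the nonnegative integers assigns to each $i\ge 0$ a codeword $c(i)\in\{0,1\}^*$ such that no codeword is a prefix of another; $n(i)$ is the length of $c(i)$ and $N=\{n(i)\}$. For $a>0$, $a\ne 1$, the penalty is $L_a(P,N)=\log_a\sum_{i\ge 0}p(i)a^{n(i)}$ (for $a=1$, the expected length $\sum_i p(i)n(i)$). A minimum-penalty code is one whose lengths minimize $L_a(P,N)$ over all binary prefix codes. *)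

theory Defs
  imports "HOL-Analysis.Analysis" "HOL-Library.Sublist"
begin

text \<open>A binary prefix code for the nonnegative integers: codewords are lists of
booleans (True = 1, False = 0) and no codeword is a prefix of another one.\<close>
definition prefix_code :: "(nat \<Rightarrow> bool list) \<Rightarrow> bool" where
  "prefix_code c \<longleftrightarrow> (\<forall>i j. i \<noteq> j \<longrightarrow> \<not> prefix (c i) (c j))"

text \<open>The penalty L_a(P,N), valued in the extended reals (the defining series may
diverge, in which case the penalty is +infinity).\<close>
definition penalty :: "real \<Rightarrow> (nat \<Rightarrow> real) \<Rightarrow> (nat \<Rightarrow> bool list) \<Rightarrow> ereal" where
  "penalty a p c =
     (if a = 1 then enn2ereal (\<Sum>i. ennreal (p i * real (length (c i))))
      else (let S = (\<Sum>i. ennreal (p i * a ^ length (c i)))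
            in if S = \<infinity> then \<infinity> else ereal (log a (enn2real S))))"

definition min_penalty_code :: "real \<Rightarrow> (nat \<Rightarrow> real) \<Rightarrow> (nat \<Rightarrow> bool list) \<Rightarrow> bool" where
  "min_penalty_code a p c \<longleftrightarrow>
     prefix_code c \<and> (\<forall>c'. prefix_code c' \<longrightarrow> penalty a p c \<le> penalty a p c')"

end

theory Submission
  imports Defs "HOL-Combinatorics.Permutations"
begin

text \<open>Minimizing \<open>L\<^sub>a\<close> amounts to minimizing the expectation of \<open>len_cost a\<close> of the
  codeword lengths. For \<open>j \<ge> r\<close> consider the problem truncated at level \<open>j\<close>: the symbols
  \<open>0, \<dots>, j\<close> get codewords, and one more leaf carries the symbols \<open>j + 1, j + 2, \<dots>\<close>, coded in
  unary below it. Its cost depends on the depth of that leaf like the cost of a single symbol of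
  weight \<open>tail_weight j = (\<Sum>k. p (j + 1 + k) * a ^ (k + 1))\<close>. The hypothesis says precisely
  that \<open>p (j + 1)\<close> and \<open>tail_weight (j + 1)\<close> are the two smallest weights of the problem at
  level \<open>j + 1\<close>, so by Huffman's sibling property their leaves may be taken to be siblings;
  merging them yields a solution at level \<open>j\<close> that is no more expensive. Hence an optimal
  solution of the finite problem at level \<open>r\<close> is at least as good as every truncation, and
  every prefix code is approximated by its truncations. Relabelling that solution so that its
  tail leaf is \<open>1\<dots>1\<close> and attaching the unary tail gives the required optimal code.\<close>

lemma prefix_length_antisym: "prefix xs ys \<Longrightarrow> length ys \<le> length xs \<Longrightarrow> xs = ys"
  by (auto elim!: prefixE)

lemma prefix_snoc_cases:
  assumes "prefix s x" "x \<noteq> s"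
  shows "prefix (s @ [b]) x \<or> prefix (s @ [\<not> b]) x"
proof -
  obtain z where "x = s @ z" "z \<noteq> []"
    using assms by (auto elim!: prefixE)
  then obtain e z' where "x = s @ e # z'"
    by (auto simp: neq_Nil_conv)
  then show ?thesis by (cases "e = b") auto
qed

lemma prefix_nth: "prefix xs ys \<Longrightarrow> k < length xs \<Longrightarrow> ys ! k = xs ! k"
  by (auto elim!: prefixE simp: nth_append)

lemma prefix_unary_iff [simp]:
  "prefix (replicate i True @ [False]) (replicate k True @ [False]) \<longleftrightarrow> i = k"
proof (induction i arbitrary: k)
  case 0
  then show ?case by (cases k) (simp_all del: prefix_snoc)
next
  case (Suc i)
  then show ?case by (cases k) (simp_all del: prefix_snoc)
qed

definition siblings :: "bool list \<Rightarrow> bool list \<Rightarrow> bool" where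
  "siblings u v \<longleftrightarrow> (\<exists>s b. u = s @ [b] \<and> v = s @ [\<not> b])"

lemma siblings_sym:
  assumes "siblings u v" shows "siblings v u"
proof -
  obtain s b where "u = s @ [b]" "v = s @ [\<not> b]"
    using assms by (auto simp: siblings_def)
  then show ?thesis
    unfolding siblings_def by (intro exI[of _ s] exI[of _ "\<not> b"]) simp
qed

text \<open>Contracts the edge from \<open>s\<close> to \<open>s @ [b]\<close>: the subtree at \<open>s @ [b]\<close> moves up to \<open>s\<close>.\<close>
definition contract :: "bool list \<Rightarrow> bool \<Rightarrow> bool list \<Rightarrow> bool list" where
  "contract s b x = (if prefix (s @ [b]) x then s @ drop (Suc (length s)) x else x)"

lemma length_contract_le: "length (contract s b x) \<le> length x"
  by (auto simp: contract_def dest: prefix_length_le)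

lemma length_contract_less: "prefix (s @ [b]) x \<Longrightarrow> length (contract s b x) < length x"
  by (auto simp: contract_def dest: prefix_length_le)

lemma contract_prefix_imp_comparable:
  assumes x: "\<not> prefix (s @ [\<not> b]) x" and y: "\<not> prefix (s @ [\<not> b]) y"
    and xy: "prefix (contract s b x) (contract s b y)"
  shows "prefix x y \<or> prefix y x"
proof (cases "prefix (s @ [b]) x"; cases "prefix (s @ [b]) y")
  assume "prefix (s @ [b]) x" "prefix (s @ [b]) y"
  then obtain u v where "x = s @ [b] @ u" "y = s @ [b] @ v"
    by (auto elim!: prefixE)
  with xy show ?thesis by (simp add: contract_def)
next
  assume hx: "prefix (s @ [b]) x" and hy: "\<not> prefix (s @ [b]) y"
  then obtain u where u: "x = s @ [b] @ u"
    by (auto elim!: prefixE)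
  with xy hy have "prefix (s @ u) y"
    by (simp add: contract_def)
  then have "y = s"
    using prefix_snoc_cases[of s y b] hy y append_prefixD by blast
  with u show ?thesis by simp
next
  assume hx: "\<not> prefix (s @ [b]) x" and hy: "prefix (s @ [b]) y"
  then obtain v where v: "y = s @ [b] @ v"
    by (auto elim!: prefixE)
  with xy hx have "prefix x (s @ v)"
    by (simp add: contract_def)
  then have "prefix x s \<or> prefix s x"
    using prefix_same_cases[of x "s @ v" s] by simp
  then have "prefix x s"
    using prefix_snoc_cases[of s x b] hx x by auto
  with v show ?thesis by (metis prefix_prefix)
next
  assume "\<not> prefix (s @ [b]) x" "\<not> prefix (s @ [b]) y"
  with xy show ?thesis by (simp add: contract_def)
qed

text \<open>The automorphism of the binary tree that complements the bits where \<open>v\<close> has a zero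
  (on the first \<open>length v\<close> positions); it maps \<open>v\<close> to a word of ones.\<close>
fun flip_along :: "bool list \<Rightarrow> bool list \<Rightarrow> bool list" where
  "flip_along (b # v) (x # w) = (x = b) # flip_along v w"
| "flip_along v w = w"

lemma length_flip_along [simp]: "length (flip_along v w) = length w"
  by (induction v w rule: flip_along.induct) auto

lemma flip_along_self: "flip_along v v = replicate (length v) True"
  by (induction v) auto

lemma prefix_flip_along_iff [simp]: "prefix (flip_along v x) (flip_along v y) \<longleftrightarrow> prefix x y"
proof (induction v x arbitrary: y rule: flip_along.induct)
  case (1 b v x w)
  show ?case
  proof (cases y)
    case (Cons z ys)
    have "((x = b) = (z = b)) \<longleftrightarrow> x = z" by blast
    then show ?thesis using 1[of ys] Cons by (simp only: flip_along.simps Cons_prefix_Cons)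
  qed simp
qed simp_all

section \<open>Prefix-free families of codewords\<close>

definition prefix_free_on :: "'a set \<Rightarrow> ('a \<Rightarrow> bool list) \<Rightarrow> bool" where
  "prefix_free_on A c \<longleftrightarrow> (\<forall>i\<in>A. \<forall>k\<in>A. i \<noteq> k \<longrightarrow> \<not> prefix (c i) (c k))"

lemma prefix_code_iff_prefix_free_on_UNIV: "prefix_code c \<longleftrightarrow> prefix_free_on UNIV c"
  by (simp add: prefix_code_def prefix_free_on_def)

lemma prefix_free_onD: "prefix_free_on A c \<Longrightarrow> i \<in> A \<Longrightarrow> k \<in> A \<Longrightarrow> i \<noteq> k \<Longrightarrow> \<not> prefix (c i) (c k)"
  by (simp add: prefix_free_on_def)

lemma prefix_free_on_cong: "prefix_free_on A c \<Longrightarrow> (\<And>i. i \<in> A \<Longrightarrow> c' i = c i) \<Longrightarrow> prefix_free_on A c'"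
  by (simp add: prefix_free_on_def)

lemma prefix_free_on_permute:
  assumes "prefix_free_on A c" "\<pi> permutes A"
  shows "prefix_free_on A (c \<circ> \<pi>)"
  unfolding prefix_free_on_def
proof (intro ballI impI)
  fix i k assume "i \<in> A" "k \<in> A" "i \<noteq> k"
  then have "\<pi> i \<in> A" "\<pi> k \<in> A" "\<pi> i \<noteq> \<pi> k"
    using assms(2) by (auto simp: permutes_in_image dest: permutes_inj injD)
  then show "\<not> prefix ((c \<circ> \<pi>) i) ((c \<circ> \<pi>) k)"
    using prefix_free_onD[OF assms(1)] by simp
qed

lemma prefix_free_on_fun_upd:
  assumes pf: "prefix_free_on A c"
    and new: "\<And>t. t \<in> A \<Longrightarrow> t \<noteq> x \<Longrightarrow> \<not> prefix (c t) u \<and> \<not> prefix u (c t)"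
  shows "prefix_free_on A (c(x := u))"
  unfolding prefix_free_on_def
proof (intro ballI impI)
  fix i k assume "i \<in> A" "k \<in> A" "i \<noteq> k"
  then show "\<not> prefix ((c(x := u)) i) ((c(x := u)) k)"
    using new prefix_free_onD[OF pf] by (cases "i = x"; cases "k = x") auto
qed

lemma prefix_free_on_truncate:
  assumes pf: "prefix_free_on A c" and x: "x \<in> A"
    and short: "\<And>t. t \<in> A \<Longrightarrow> t \<noteq> x \<Longrightarrow> length (c t) \<le> L"
  shows "prefix_free_on A (c(x := take L (c x)))"
proof (rule prefix_free_on_fun_upd[OF pf])
  fix t assume t: "t \<in> A" "t \<noteq> x"
  show "\<not> prefix (c t) (take L (c x)) \<and> \<not> prefix (take L (c x)) (c t)"
  proof
    show "\<not> prefix (c t) (take L (c x))"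
      using prefix_free_onD[OF pf t(1) x t(2)] take_is_prefix prefix_order.trans by blast
    show "\<not> prefix (take L (c x)) (c t)"
    proof
      assume tc: "prefix (take L (c x)) (c t)"
      show False
      proof (cases "length (c x) \<le> L")
        case True
        then show False using tc prefix_free_onD[OF pf x t(1)] t(2) by simp
      next
        case False
        then have "take L (c x) = c t"
          using prefix_length_antisym[OF tc] short[OF t] by simp
        then show False
          using prefix_free_onD[OF pf t(1) x t(2)] take_is_prefix by metis
      qed
    qed
  qed
qed

lemma prefix_free_on_merge_siblings:
  assumes pf: "prefix_free_on A c" and x: "x \<in> A" and y: "y \<in> A"
    and cx: "c x = s @ [b]" and cy: "c y = s @ [\<not> b]"
  shows "prefix_free_on (A - {y}) (c(x := s))"
proof (rule prefix_free_on_fun_upd)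
  show "prefix_free_on (A - {y}) c"
    using pf by (simp add: prefix_free_on_def)
  fix t assume "t \<in> A - {y}" "t \<noteq> x"
  then have t: "t \<in> A" "t \<noteq> x" "t \<noteq> y" by auto
  show "\<not> prefix (c t) s \<and> \<not> prefix s (c t)"
  proof
    show "\<not> prefix (c t) s"
      using prefix_free_onD[OF pf t(1) x t(2)] cx by auto
    show "\<not> prefix s (c t)"
    proof
      assume "prefix s (c t)"
      moreover have "c t \<noteq> s"
        using prefix_free_onD[OF pf t(1) x t(2)] cx by auto
      ultimately have "prefix (c x) (c t) \<or> prefix (c y) (c t)"
        using prefix_snoc_cases cx cy by metis
      then show False
        using prefix_free_onD[OF pf x t(1)] prefix_free_onD[OF pf y t(1)] t by auto
    qed
  qed
qed

lemma prefix_free_on_contract: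
  assumes pf: "prefix_free_on A c" and empty: "\<forall>t\<in>A. \<not> prefix (s @ [\<not> b]) (c t)"
  shows "prefix_free_on A (contract s b \<circ> c)"
  unfolding prefix_free_on_def
proof (intro ballI impI notI)
  fix i k assume ik: "i \<in> A" "k \<in> A" "i \<noteq> k"
    and "prefix ((contract s b \<circ> c) i) ((contract s b \<circ> c) k)"
  then have "prefix (c i) (c k) \<or> prefix (c k) (c i)"
    using contract_prefix_imp_comparable[of s b "c i" "c k"] empty ik by simp
  then show False
    using prefix_free_onD[OF pf] ik by blast
qed

lemma prefix_free_on_graft:
  assumes pf: "prefix_free_on A c" and x: "x \<in> A" and pfd: "prefix_free_on B d"
    and outer: "\<And>t. t \<in> A - {x} \<Longrightarrow> e t = c t"
    and inner: "\<And>t. t \<in> B \<Longrightarrow> e t = c x @ d t"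
  shows "prefix_free_on (A - {x} \<union> B) e"
proof -
  have outer_inner: "\<not> prefix (c t) (c x @ u) \<and> \<not> prefix (c x @ u) (c t)"
    if t: "t \<in> A" "t \<noteq> x" for t u
  proof
    show "\<not> prefix (c t) (c x @ u)"
      using prefix_free_onD[OF pf t(1) x t(2)] prefix_free_onD[OF pf x t(1)] t(2)
        prefix_same_cases[of "c t" "c x @ u" "c x"] by auto
    show "\<not> prefix (c x @ u) (c t)"
      using prefix_free_onD[OF pf x t(1)] t(2) append_prefixD by blast
  qed
  show ?thesis
    unfolding prefix_free_on_def
  proof (intro ballI impI)
    fix i k assume i: "i \<in> A - {x} \<union> B" and k: "k \<in> A - {x} \<union> B" and ik: "i \<noteq> k"
    consider "i \<in> B" "k \<in> B" | "i \<in> A - {x}" "k \<in> A - {x}"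
      | "i \<in> A - {x}" "k \<in> B" | "i \<in> B" "k \<in> A - {x}"
      using i k by blast
    then show "\<not> prefix (e i) (e k)"
    proof cases
      case 1
      then show ?thesis using prefix_free_onD[OF pfd 1 ik] by (simp add: inner)
    next
      case 2
      then show ?thesis using prefix_free_onD[OF pf _ _ ik] by (simp add: outer)
    next
      case 3
      then show ?thesis using outer_inner by (simp add: outer inner)
    next
      case 4
      then show ?thesis using outer_inner by (simp add: outer inner)
    qed
  qed
qed

lemma prefix_free_on_unary:
  "inj_on f A \<Longrightarrow> prefix_free_on A (\<lambda>t. replicate (f t) True @ [False])"
  unfolding prefix_free_on_def inj_on_def by (metis prefix_unary_iff)

lemma prefix_free_on_flip_along: "prefix_free_on A c \<Longrightarrow> prefix_free_on A (flip_along v \<circ> c)"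
  by (simp add: prefix_free_on_def)

lemma prefix_code_unary_extension:
  assumes pf: "prefix_free_on {..Suc r} c" and leaf: "c (Suc r) = replicate m True"
  shows "prefix_code (\<lambda>i. if i \<le> r then c i else replicate (m + (i - Suc r)) True @ [False])"
proof -
  have "prefix_free_on ({..Suc r} - {Suc r} \<union> {Suc r..})
          (\<lambda>i. if i \<le> r then c i else replicate (m + (i - Suc r)) True @ [False])"
    using pf leaf inj_on_diff_nat[of "{Suc r..}" "Suc r"]
    by (intro prefix_free_on_graft[OF pf _ prefix_free_on_unary[of "\<lambda>i. i - Suc r"]])
      (auto simp: replicate_add[symmetric] add_diff_assoc)
  moreover have "{..Suc r} - {Suc r} \<union> {Suc r..} = UNIV"
    by auto
  ultimately show ?thesis
    by (simp add: prefix_code_iff_prefix_free_on_UNIV)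
qed

section \<open>Huffman's sibling property\<close>

definition weighted_cost :: "('a \<Rightarrow> real) \<Rightarrow> (nat \<Rightarrow> real) \<Rightarrow> 'a set \<Rightarrow> ('a \<Rightarrow> bool list) \<Rightarrow> real" where
  "weighted_cost w \<phi> A c = (\<Sum>t\<in>A. w t * \<phi> (length (c t)))"

lemma weighted_cost_mono:
  assumes "mono \<phi>" "\<And>t. t \<in> A \<Longrightarrow> 0 \<le> w t" "\<And>t. t \<in> A \<Longrightarrow> length (c' t) \<le> length (c t)"
  shows "weighted_cost w \<phi> A c' \<le> weighted_cost w \<phi> A c"
  unfolding weighted_cost_def using assms by (intro sum_mono mult_left_mono) (auto simp: monoD)

lemma weighted_cost_transpose_le:
  assumes "finite A" "i \<in> A" "k \<in> A" "mono \<phi>"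
    and "w i \<le> w k" "length (c i) \<le> length (c k)"
  shows "weighted_cost w \<phi> A (c \<circ> Transposition.transpose i k) \<le> weighted_cost w \<phi> A c"
proof (cases "i = k")
  case False
  let ?d = "\<lambda>t. w t * \<phi> (length ((c \<circ> Transposition.transpose i k) t)) - w t * \<phi> (length (c t))"
  have "weighted_cost w \<phi> A (c \<circ> Transposition.transpose i k) - weighted_cost w \<phi> A c = sum ?d A"
    by (simp add: weighted_cost_def sum_subtractf)
  also have "\<dots> = sum ?d {i, k}"
    using assms(1-3) by (intro sum.mono_neutral_right) auto
  also have "\<dots> = (w i - w k) * (\<phi> (length (c k)) - \<phi> (length (c i)))"
    using False by (simp add: algebra_simps)
  also have "\<dots> \<le> 0"
    using assms(4-6) by (intro mult_nonpos_nonneg) (auto simp: monoD)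
  finally show ?thesis by simp
qed simp

lemma exists_deepest_in_pair:
  assumes fin: "finite A" and x: "x \<in> A" and y: "y \<in> A" and mono: "mono \<phi>"
    and light: "\<And>t. t \<in> A - {x, y} \<Longrightarrow> w x \<le> w t" and pf: "prefix_free_on A c"
  obtains c1 \<alpha> where "prefix_free_on A c1" "weighted_cost w \<phi> A c1 \<le> weighted_cost w \<phi> A c"
    "(\<Sum>t\<in>A. length (c1 t)) = (\<Sum>t\<in>A. length (c t))"
    "\<alpha> \<in> {x, y}" "\<And>t. t \<in> A \<Longrightarrow> length (c1 t) \<le> length (c1 \<alpha>)"
proof -
  define m where "m = Max ((\<lambda>t. length (c t)) ` A)"
  have "m \<in> (\<lambda>t. length (c t)) ` A"
    unfolding m_def using fin x by (intro Max_in) auto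
  then obtain l where "l \<in> A" "length (c l) = m"
    by auto
  then have l: "l \<in> A" "\<And>t. t \<in> A \<Longrightarrow> length (c t) \<le> length (c l)"
    using fin by (auto simp: m_def)
  define \<alpha> where "\<alpha> = (if l \<in> {x, y} then l else x)"
  define \<pi> where "\<pi> = Transposition.transpose \<alpha> l"
  have \<pi>: "\<pi> permutes A"
    unfolding \<pi>_def using l(1) x by (intro permutes_swap_id) (auto simp: \<alpha>_def)
  show thesis
  proof (rule that[of "c \<circ> \<pi>" \<alpha>])
    show "prefix_free_on A (c \<circ> \<pi>)"
      by (rule prefix_free_on_permute[OF pf \<pi>])
    show "weighted_cost w \<phi> A (c \<circ> \<pi>) \<le> weighted_cost w \<phi> A c"
      unfolding \<pi>_def using l x
      by (intro weighted_cost_transpose_le fin mono) (auto simp: \<alpha>_def light)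
    show "(\<Sum>t\<in>A. length ((c \<circ> \<pi>) t)) = (\<Sum>t\<in>A. length (c t))"
      using sum.permute[OF \<pi>, of "\<lambda>t. length (c t)"] by (simp add: comp_def)
    show "\<alpha> \<in> {x, y}"
      by (simp add: \<alpha>_def)
    show "length ((c \<circ> \<pi>) t) \<le> length ((c \<circ> \<pi>) \<alpha>)" if "t \<in> A" for t
      using l(2) permutes_in_image[OF \<pi>] that by (simp add: \<pi>_def)
  qed
qed

text \<open>If the sibling node of the deepest codeword \<open>c \<alpha>\<close> carries a codeword, that codeword
  may be exchanged with \<open>c \<beta>\<close>; otherwise the last edge of \<open>c \<alpha>\<close> can be contracted.\<close>
lemma deepest_siblings_or_shorter:
  assumes fin: "finite A" and \<alpha>: "\<alpha> \<in> A" and \<beta>: "\<beta> \<in> A" "\<alpha> \<noteq> \<beta>" and mono: "mono \<phi>"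
    and nonneg: "\<And>t. t \<in> A \<Longrightarrow> 0 \<le> w t" and light: "\<And>t. t \<in> A - {\<alpha>, \<beta>} \<Longrightarrow> w \<beta> \<le> w t"
    and pf: "prefix_free_on A c" and deepest: "\<And>t. t \<in> A \<Longrightarrow> length (c t) \<le> length (c \<alpha>)"
  shows "\<exists>c'. prefix_free_on A c' \<and> weighted_cost w \<phi> A c' \<le> weighted_cost w \<phi> A c
           \<and> (siblings (c' \<alpha>) (c' \<beta>) \<or> (\<Sum>t\<in>A. length (c' t)) < (\<Sum>t\<in>A. length (c t)))"
proof -
  have "c \<alpha> \<noteq> []"
    using prefix_free_onD[OF pf \<alpha> \<beta>] by auto
  then obtain s b where s: "c \<alpha> = s @ [b]"
    by (metis rev_exhaust)
  show ?thesis
  proof (cases "\<exists>t\<in>A. prefix (s @ [\<not> b]) (c t)")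
    case True
    then obtain t where t: "t \<in> A" "prefix (s @ [\<not> b]) (c t)"
      by blast
    have ct: "c t = s @ [\<not> b]"
      using prefix_length_antisym[OF t(2)] deepest[OF t(1)] s by simp
    then have "t \<noteq> \<alpha>"
      using s by auto
    define c' where "c' = c \<circ> Transposition.transpose \<beta> t"
    have "w \<beta> \<le> w t"
      using light t(1) \<open>t \<noteq> \<alpha>\<close> by (cases "t = \<beta>") auto
    then have "weighted_cost w \<phi> A c' \<le> weighted_cost w \<phi> A c"
      unfolding c'_def using \<beta>(1) t(1) deepest[of \<beta>] ct s
      by (intro weighted_cost_transpose_le fin mono) auto
    moreover have "prefix_free_on A c'"
      unfolding c'_def by (rule prefix_free_on_permute[OF pf permutes_swap_id[OF \<beta>(1) t(1)]])
    moreover have "siblings (c' \<alpha>) (c' \<beta>)"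
      using s ct \<open>t \<noteq> \<alpha>\<close> \<beta>(2) by (simp add: c'_def siblings_def)
    ultimately show ?thesis
      by blast
  next
    case False
    define c' where "c' = contract s b \<circ> c"
    have shorter: "length (c' t) \<le> length (c t)" for t
      unfolding c'_def by (simp add: length_contract_le)
    have "length (c' \<alpha>) < length (c \<alpha>)"
      unfolding c'_def using length_contract_less[of s b "c \<alpha>"] s by simp
    then have "(\<Sum>t\<in>A. length (c' t)) < (\<Sum>t\<in>A. length (c t))"
      using \<alpha> fin shorter by (intro sum_strict_mono_ex1) auto
    moreover have "prefix_free_on A c'"
      unfolding c'_def using prefix_free_on_contract[OF pf] False by blast
    moreover have "weighted_cost w \<phi> A c' \<le> weighted_cost w \<phi> A c"
      using mono nonneg shorter by (rule weighted_cost_mono)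
    ultimately show ?thesis
      by blast
  qed
qed

lemma exists_sibling_code:
  assumes fin: "finite A" and x: "x \<in> A" and y: "y \<in> A" and xy: "x \<noteq> y" and mono: "mono \<phi>"
    and nonneg: "\<And>t. t \<in> A \<Longrightarrow> 0 \<le> w t"
    and light: "\<And>t. t \<in> A - {x, y} \<Longrightarrow> w x \<le> w t \<and> w y \<le> w t"
    and pf: "prefix_free_on A c"
  shows "\<exists>c'. prefix_free_on A c' \<and> weighted_cost w \<phi> A c' \<le> weighted_cost w \<phi> A c
           \<and> siblings (c' x) (c' y)"
  using pf
proof (induction "\<Sum>t\<in>A. length (c t)" arbitrary: c rule: less_induct)
  case less
  let ?cost = "weighted_cost w \<phi> A"
  obtain c1 \<alpha> where pf1: "prefix_free_on A c1" and cost1: "?cost c1 \<le> ?cost c"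
    and len1: "(\<Sum>t\<in>A. length (c1 t)) = (\<Sum>t\<in>A. length (c t))" and \<alpha>: "\<alpha> \<in> {x, y}"
    and deepest: "\<And>t. t \<in> A \<Longrightarrow> length (c1 t) \<le> length (c1 \<alpha>)"
    using exists_deepest_in_pair[OF fin x y mono _ less.prems] light by blast
  define \<beta> where "\<beta> = (if \<alpha> = x then y else x)"
  have \<alpha>\<beta>: "\<alpha> \<in> A" "\<beta> \<in> A" "\<alpha> \<noteq> \<beta>" "{\<alpha>, \<beta>} = {x, y}"
    using \<alpha> x y xy by (auto simp: \<beta>_def)
  have light_\<beta>: "w \<beta> \<le> w t" if "t \<in> A - {\<alpha>, \<beta>}" for t
  proof -
    have "t \<in> A - {x, y}"
      using that \<alpha>\<beta>(4) by simp
    then show ?thesis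
      using light by (auto simp: \<beta>_def)
  qed
  obtain c' where c': "prefix_free_on A c'" "?cost c' \<le> ?cost c1"
    and alt: "siblings (c' \<alpha>) (c' \<beta>) \<or> (\<Sum>t\<in>A. length (c' t)) < (\<Sum>t\<in>A. length (c1 t))"
    using deepest_siblings_or_shorter[where w = w, OF fin \<alpha>\<beta>(1-3) mono nonneg light_\<beta> pf1 deepest]
    by blast
  from alt consider "siblings (c' \<alpha>) (c' \<beta>)" | "(\<Sum>t\<in>A. length (c' t)) < (\<Sum>t\<in>A. length (c t))"
    using len1 by auto
  then show ?case
  proof cases
    case 1
    then have "siblings (c' x) (c' y)"
      using siblings_sym \<alpha> by (cases "\<alpha> = x") (auto simp: \<beta>_def)
    then show ?thesis
      using c' cost1 by (meson order_trans)
  next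
    case 2
    then show ?thesis
      using less.hyps[OF 2 c'(1)] c'(2) cost1 by (meson order_trans)
  qed
qed

section \<open>Optimal codes for finitely many symbols\<close>

text \<open>Pigeonhole: the subtrees hanging off the path to a codeword of length at least
  \<open>card A\<close> cannot all contain one of the other \<open>card A - 1\<close> codewords.\<close>
lemma exists_empty_sibling_subtree:
  assumes fin: "finite A" and pf: "prefix_free_on A c" and i: "i \<in> A"
    and long: "card A \<le> length (c i)"
  shows "\<exists>k < length (c i). \<forall>t\<in>A. \<not> prefix (take k (c i) @ [\<not> c i ! k]) (c t)"
proof (rule ccontr)
  define w where "w = c i"
  define \<sigma> where "\<sigma> k = take k w @ [\<not> w ! k]" for k
  assume "\<not> ?thesis"
  then obtain f where f: "\<And>k. k < length w \<Longrightarrow> f k \<in> A \<and> prefix (\<sigma> k) (c (f k))"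
    unfolding w_def \<sigma>_def by metis
  have f_nth: "c (f k') ! k = (if k = k' then \<not> w ! k else w ! k)"
    if "k \<le> k'" "k' < length w" for k k'
    using prefix_nth[of "\<sigma> k'" "c (f k')" k] f[OF that(2)] that by (auto simp: \<sigma>_def nth_append)
  have "f k \<in> A - {i}" if "k < length w" for k
    using f_nth[of k k] f[OF that] that by (auto simp: w_def)
  moreover have "inj_on f {..<length w}"
  proof (rule inj_onI)
    fix k k' assume "k \<in> {..<length w}" "k' \<in> {..<length w}" "f k = f k'"
    then show "k = k'"
      using f_nth[of k k'] f_nth[of k' k] f_nth[of k k] f_nth[of k' k']
      by (cases k k' rule: linorder_cases) auto
  qed
  ultimately have "length w \<le> card (A - {i})"
    using card_inj_on_le[of f "{..<length w}" "A - {i}"] fin by auto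
  moreover have "0 < card A"
    using fin i card_gt_0_iff by blast
  ultimately show False
    using long i fin by (simp add: w_def card_Diff_singleton)
qed

lemma exists_short_prefix_free:
  assumes fin: "finite A" and pf: "prefix_free_on A c"
  shows "\<exists>c'. prefix_free_on A c' \<and> (\<forall>t\<in>A. length (c' t) \<le> length (c t))
           \<and> (\<forall>t\<in>A. length (c' t) < card A)"
  using pf
proof (induction "\<Sum>t\<in>A. length (c t)" arbitrary: c rule: less_induct)
  case less
  show ?case
  proof (cases "\<forall>t\<in>A. length (c t) < card A")
    case True
    then show ?thesis using less.prems by blast
  next
    case False
    then obtain i where i: "i \<in> A" "card A \<le> length (c i)"
      by (auto simp: not_less)
    obtain k where k: "k < length (c i)"
      and empty: "\<forall>t\<in>A. \<not> prefix (take k (c i) @ [\<not> c i ! k]) (c t)"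
      using exists_empty_sibling_subtree[OF fin less.prems i] by blast
    define c2 where "c2 = contract (take k (c i)) (c i ! k) \<circ> c"
    have pf2: "prefix_free_on A c2"
      unfolding c2_def using prefix_free_on_contract[OF less.prems empty] .
    have shorter: "length (c2 t) \<le> length (c t)" for t
      unfolding c2_def by (simp add: length_contract_le)
    have "prefix (take k (c i) @ [c i ! k]) (c i)"
      using k by (metis take_Suc_conv_app_nth take_is_prefix)
    then have "length (c2 i) < length (c i)"
      unfolding c2_def using length_contract_less by simp
    then have "(\<Sum>t\<in>A. length (c2 t)) < (\<Sum>t\<in>A. length (c t))"
      using i(1) fin shorter by (intro sum_strict_mono_ex1) auto
    then obtain c' where "prefix_free_on A c'" "\<forall>t\<in>A. length (c' t) \<le> length (c2 t)"
      "\<forall>t\<in>A. length (c' t) < card A"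
      using less.hyps[OF _ pf2] by blast
    then show ?thesis
      using shorter by (meson order_trans)
  qed
qed

lemma exists_min_weighted_cost:
  assumes fin: "finite A" and mono: "mono \<phi>" and nonneg: "\<And>t. t \<in> A \<Longrightarrow> 0 \<le> w t"
  obtains c0 where "prefix_free_on A c0" "\<And>t. t \<in> A \<Longrightarrow> length (c0 t) < card A"
    "\<And>c. prefix_free_on A c \<Longrightarrow> weighted_cost w \<phi> A c0 \<le> weighted_cost w \<phi> A c"
proof -
  let ?cost = "weighted_cost w \<phi> A"
  define S where "S = {c. prefix_free_on A c \<and> (\<forall>t\<in>A. length (c t) < card A)
                          \<and> (\<forall>t. t \<notin> A \<longrightarrow> c t = [])}"
  have "S \<subseteq> {c. \<forall>t. (t \<in> A \<longrightarrow> c t \<in> {xs. set xs \<subseteq> UNIV \<and> length xs \<le> card A}) \<and> (t \<notin> A \<longrightarrow> c t = [])}"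
    by (auto simp: S_def less_imp_le)
  then have "finite S"
    by (rule finite_subset) (intro finite_set_of_finite_funs fin finite_lists_length_le, simp)
  have short: "\<exists>c'\<in>S. ?cost c' \<le> ?cost c" if pf: "prefix_free_on A c" for c
  proof -
    obtain c' where c': "prefix_free_on A c'" "\<forall>t\<in>A. length (c' t) \<le> length (c t)"
      "\<forall>t\<in>A. length (c' t) < card A"
      using exists_short_prefix_free[OF fin pf] by blast
    define c'' where "c'' t = (if t \<in> A then c' t else [])" for t
    have "prefix_free_on A c''"
      using c'(1) by (rule prefix_free_on_cong) (simp add: c''_def)
    with c'(3) have "c'' \<in> S"
      by (auto simp: S_def c''_def)
    moreover have "?cost c'' \<le> ?cost c"
      using mono nonneg c'(2) by (intro weighted_cost_mono) (auto simp: c''_def)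
    ultimately show ?thesis
      by blast
  qed
  obtain f where "bij_betw f A {0..<card A}"
    using ex_bij_betw_finite_nat[OF fin] by blast
  then have "S \<noteq> {}"
    using short[OF prefix_free_on_unary[OF bij_betw_imp_inj_on]] by blast
  define c0 where "c0 = arg_min_on ?cost S"
  have c0: "c0 \<in> S" "\<And>c. c \<in> S \<Longrightarrow> ?cost c0 \<le> ?cost c"
    unfolding c0_def
    using arg_min_if_finite(1)[OF \<open>finite S\<close> \<open>S \<noteq> {}\<close>] arg_min_least[OF \<open>finite S\<close> \<open>S \<noteq> {}\<close>]
    by auto
  show thesis
  proof (rule that)
    show "prefix_free_on A c0" "\<And>t. t \<in> A \<Longrightarrow> length (c0 t) < card A"
      using c0(1) by (auto simp: S_def)
    fix c assume "prefix_free_on A c"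
    then obtain c' where "c' \<in> S" "?cost c' \<le> ?cost c"
      using short by blast
    then show "?cost c0 \<le> ?cost c"
      using c0(2) by (meson order_trans)
  qed
qed

section \<open>The penalty and the expected length cost\<close>

text \<open>\<open>log\<^sub>a\<close> is increasing for \<open>a > 1\<close> and decreasing for \<open>a < 1\<close>, so a code minimizes the
  penalty \<open>L\<^sub>a\<close> iff it minimizes the expectation of \<open>len_cost a\<close> (hence the sign for \<open>a < 1\<close>).\<close>
definition len_cost :: "real \<Rightarrow> nat \<Rightarrow> real" where
  "len_cost a n = (if a = 1 then real n else if 1 < a then a ^ n else - (a ^ n))"

definition exp_cost :: "real \<Rightarrow> (nat \<Rightarrow> real) \<Rightarrow> (nat \<Rightarrow> bool list) \<Rightarrow> real" where
  "exp_cost a p c = (\<Sum>i. p i * len_cost a (length (c i)))"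

lemma len_cost_mono: "0 < a \<Longrightarrow> mono (len_cost a)"
  by (auto simp: mono_def len_cost_def power_increasing power_decreasing)

lemma len_cost_shift: "len_cost a (n + m) - len_cost a m = a ^ m * (len_cost a n - len_cost a 0)"
  by (simp add: len_cost_def power_add algebra_simps)

lemma len_cost_nonneg: "1 \<le> a \<Longrightarrow> 0 \<le> len_cost a n"
  by (simp add: len_cost_def)

lemma len_cost_bounds: "0 < a \<Longrightarrow> a < 1 \<Longrightarrow> - 1 \<le> len_cost a n \<and> len_cost a n \<le> 0"
  by (simp add: len_cost_def power_le_one)

lemma suminf_ennreal_eq:
  fixes f :: "nat \<Rightarrow> real"
  assumes "\<And>i. 0 \<le> f i"
  shows "(\<Sum>i. ennreal (f i)) = (if summable f then ennreal (suminf f) else top)"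
  using suminf_ennreal2[where f = f, OF assms] summable_suminf_not_top[where f = f, OF assms]
  by auto

lemma penalty_one:
  assumes "\<And>i. 0 \<le> p i"
  shows "penalty 1 p c = (if summable (\<lambda>i. p i * real (length (c i)))
                          then ereal (\<Sum>i. p i * real (length (c i))) else \<infinity>)"
proof -
  let ?f = "\<lambda>i. p i * real (length (c i))"
  have nonneg: "0 \<le> ?f i" for i
    using assms by simp
  show ?thesis
    using suminf_ennreal_eq[of ?f, OF nonneg] suminf_nonneg[of ?f, OF _ nonneg]
    by (simp add: penalty_def)
qed

lemma penalty_ne_one:
  assumes "\<And>i. 0 \<le> p i" "0 < a" "a \<noteq> 1"
  shows "penalty a p c = (if summable (\<lambda>i. p i * a ^ length (c i))
                          then ereal (log a (\<Sum>i. p i * a ^ length (c i))) else \<infinity>)"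
proof -
  let ?f = "\<lambda>i. p i * a ^ length (c i)"
  have nonneg: "0 \<le> ?f i" for i
    using assms by simp
  show ?thesis
    using suminf_ennreal_eq[of ?f, OF nonneg] suminf_nonneg[of ?f, OF _ nonneg] assms(3)
    by (simp add: penalty_def)
qed

lemma summable_pow_length:
  fixes p :: "nat \<Rightarrow> real"
  assumes "\<And>i. 0 \<le> p i" "summable p" "0 < a" "a < 1"
  shows "summable (\<lambda>i. p i * a ^ length (c i))"
proof (rule summable_comparison_test'[OF assms(2)])
  show "norm (p n * a ^ length (c n)) \<le> p n" for n
    using assms by (simp add: mult_left_le power_le_one abs_mult)
qed

lemma log_le_log_base_less_1:
  "0 < a \<Longrightarrow> a < 1 \<Longrightarrow> 0 < x \<Longrightarrow> 0 < y \<Longrightarrow> log a x \<le> log a y \<longleftrightarrow> y \<le> x"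
  by (simp add: log_def divide_le_cancel)

lemma min_penalty_code_if_min_exp_cost:
  assumes p_pos: "\<And>i. 0 < p i" and p: "summable p" and a: "0 < a"
    and pc: "prefix_code c" and sc: "summable (\<lambda>i. p i * len_cost a (length (c i)))"
    and min: "\<And>c'. prefix_code c' \<Longrightarrow> summable (\<lambda>i. p i * len_cost a (length (c' i))) \<Longrightarrow>
                exp_cost a p c \<le> exp_cost a p c'"
  shows "min_penalty_code a p c"
  unfolding min_penalty_code_def
proof (intro conjI allI impI pc)
  fix c' assume pc': "prefix_code c'"
  have p_nonneg: "0 \<le> p i" for i
    using p_pos less_imp_le by blast
  have pos: "0 < (\<Sum>i. p i * a ^ length (d i))" if "summable (\<lambda>i. p i * a ^ length (d i))" for d
    using that a p_pos by (intro suminf_pos) auto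
  consider "a = 1" | "1 < a" | "a < 1"
    by linarith
  then show "penalty a p c \<le> penalty a p c'"
  proof cases
    case 1
    then show ?thesis
      using sc min[OF pc'] by (simp add: penalty_one p_nonneg exp_cost_def len_cost_def)
  next
    case 2
    then have "log a (\<Sum>i. p i * a ^ length (c i)) \<le> log a (\<Sum>i. p i * a ^ length (c' i))"
      if "summable (\<lambda>i. p i * a ^ length (c' i))"
      using that sc min[OF pc'] pos[of c] pos[of c'] by (simp add: exp_cost_def len_cost_def)
    then show ?thesis
      using sc 2 by (simp add: penalty_ne_one p_nonneg len_cost_def)
  next
    case 3
    note summable = summable_pow_length[OF p_nonneg p a 3]
    have "exp_cost a p d = - (\<Sum>i. p i * a ^ length (d i))" for d
      using suminf_minus[OF summable[of d]] 3 by (simp add: exp_cost_def len_cost_def)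
    then have "(\<Sum>i. p i * a ^ length (c' i)) \<le> (\<Sum>i. p i * a ^ length (c i))"
      using min[OF pc'] summable_minus[OF summable[of c']] 3 by (simp add: len_cost_def)
    then have "log a (\<Sum>i. p i * a ^ length (c i)) \<le> log a (\<Sum>i. p i * a ^ length (c' i))"
      using log_le_log_base_less_1[OF a 3 pos[OF summable] pos[OF summable]] by blast
    moreover have "penalty a p d = ereal (log a (\<Sum>i. p i * a ^ length (d i)))" for d
      using penalty_ne_one[of p a d] p_nonneg a 3 summable[of d] by simp
    ultimately show ?thesis
      by simp
  qed
qed

section \<open>Truncated problems\<close>

lemma suminf_tail_tendsto_0:
  fixes f :: "nat \<Rightarrow> 'a::real_normed_vector"
  assumes "summable f"
  shows "(\<lambda>n. \<Sum>i. f (i + n)) \<longlonglongrightarrow> 0"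
proof -
  have "(\<lambda>n. suminf f - (\<Sum>i<n. f i)) \<longlonglongrightarrow> suminf f - suminf f"
    by (intro tendsto_diff tendsto_const summable_LIMSEQ[OF assms])
  then show ?thesis
    by (simp add: suminf_minus_initial_segment[OF assms])
qed

locale unary_tail_setting =
  fixes p :: "nat \<Rightarrow> real" and a :: real and r :: nat
  assumes p_pos: "\<And>i. p i > 0" and p_sums: "p sums 1" and a_pos: "a > 0"
    and tail_dominated: "\<And>i j. r < j \<Longrightarrow> i < j \<Longrightarrow>
        p i \<ge> p j \<and> ennreal (p i) \<ge> (\<Sum>k. ennreal (p (j + 1 + k) * a ^ (k + 1)))"
begin

abbreviation \<phi> :: "nat \<Rightarrow> real" where
  "\<phi> \<equiv> len_cost a"

definition tail_weight :: "nat \<Rightarrow> real" where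
  "tail_weight j = (\<Sum>k. p (j + 1 + k) * a ^ (k + 1))"

text \<open>The cost of the symbols \<open>j + 1, j + 2, \<dots>\<close> coded in unary below a node of depth \<open>d\<close>,
  i.e.\ symbol \<open>j + 1 + k\<close> gets a codeword of length \<open>d + 1 + k\<close>.\<close>
definition tail_cost :: "nat \<Rightarrow> nat \<Rightarrow> real" where
  "tail_cost j d = (\<Sum>k. p (j + 1 + k) * \<phi> (d + 1 + k))"

text \<open>The problem truncated at level \<open>j\<close>: the leaf \<open>Suc j\<close> stands for all symbols beyond \<open>j\<close>,
  which are coded in unary below it.\<close>
definition trunc_cost :: "nat \<Rightarrow> (nat \<Rightarrow> bool list) \<Rightarrow> real" where
  "trunc_cost j c = (\<Sum>i\<le>j. p i * \<phi> (length (c i))) + tail_cost j (length (c (Suc j)))"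

definition trunc_weight :: "nat \<Rightarrow> nat \<Rightarrow> real" where
  "trunc_weight j i = (if i \<le> j then p i else tail_weight j)"

lemma p_nonneg: "0 \<le> p i"
  using p_pos less_imp_le by blast

lemma summable_p: "summable p"
  using p_sums by (simp add: sums_iff)

lemma summable_p_shift: "summable (\<lambda>k. p (j + k))"
  using summable_p summable_iff_shift[of p j] by (simp add: add.commute)

lemma p_antimono: "r < j \<Longrightarrow> i < j \<Longrightarrow> p j \<le> p i"
  using tail_dominated by blast

lemma summable_p_pow: "summable (\<lambda>n. p n * a ^ n)"
proof -
  let ?g = "\<lambda>k. p (Suc r + 1 + k) * a ^ (k + 1)"
  have "(\<Sum>k. ennreal (?g k)) \<le> ennreal (p 0)"
    using tail_dominated[of "Suc r" 0] by simp
  then have "summable ?g"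
    using a_pos p_nonneg by (intro summable_suminf_not_top) (auto simp: top_unique)
  then have "summable (\<lambda>k. a ^ Suc r * ?g k)"
    by (rule summable_mult)
  then have "summable (\<lambda>k. p (k + (r + 2)) * a ^ (k + (r + 2)))"
    by (simp add: power_add ac_simps)
  then show ?thesis
    by (rule summable_iff_shift[THEN iffD1])
qed

lemma summable_tail_weight_series: "summable (\<lambda>k. p (j + 1 + k) * a ^ (k + 1))"
proof -
  have "summable (\<lambda>k. p (k + (j + 1)) * a ^ (k + (j + 1)))"
    using summable_iff_shift[where f = "\<lambda>n. p n * a ^ n" and k = "j + 1"] summable_p_pow by simp
  then have "summable (\<lambda>k. p (k + (j + 1)) * a ^ (k + (j + 1)) / a ^ j)"
    by (rule summable_divide)
  also have "(\<lambda>k. p (k + (j + 1)) * a ^ (k + (j + 1)) / a ^ j) = (\<lambda>k. p (j + 1 + k) * a ^ (k + 1))"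
    using a_pos by (simp add: power_add ac_simps)
  finally show ?thesis .
qed

lemma tail_weight_nonneg: "0 \<le> tail_weight j"
  unfolding tail_weight_def using summable_tail_weight_series p_nonneg a_pos
  by (intro suminf_nonneg) auto

lemma tail_weight_le: "r < j \<Longrightarrow> i < j \<Longrightarrow> tail_weight j \<le> p i"
proof -
  assume ij: "r < j" "i < j"
  have "ennreal (tail_weight j) = (\<Sum>k. ennreal (p (j + 1 + k) * a ^ (k + 1)))"
    unfolding tail_weight_def using summable_tail_weight_series p_nonneg a_pos
    by (intro suminf_ennreal2[symmetric]) auto
  also have "\<dots> \<le> ennreal (p i)"
    using tail_dominated[OF ij] by blast
  finally show ?thesis
    using p_nonneg by simp
qed

lemma tail_weight_Suc: "tail_weight j = a * (p (Suc j) + tail_weight (Suc j))"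
proof -
  let ?f = "\<lambda>k. p (j + 1 + k) * a ^ (k + 1)"
  have "tail_weight j = ?f 0 + (\<Sum>k. ?f (Suc k))"
    unfolding tail_weight_def using suminf_split_head[OF summable_tail_weight_series] by simp
  also have "(\<Sum>k. ?f (Suc k)) = (\<Sum>k. a * (p (Suc j + 1 + k) * a ^ (k + 1)))"
    by (simp add: ac_simps)
  also have "\<dots> = a * tail_weight (Suc j)"
    unfolding tail_weight_def by (rule suminf_mult[OF summable_tail_weight_series])
  finally show ?thesis
    by (simp add: algebra_simps)
qed

lemma tail_weight_le_const: "r < j \<Longrightarrow> i \<le> j \<Longrightarrow> tail_weight j \<le> (1 + 2 * a) * p i"
proof -
  assume ij: "r < j" "i \<le> j"
  have "0 \<le> 2 * a * p i"
    using a_pos p_nonneg[of i] by simp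
  moreover have "tail_weight j \<le> p i \<or> tail_weight j \<le> 2 * a * p i"
  proof (cases "i < j")
    case True
    then show ?thesis
      using tail_weight_le[OF ij(1)] by blast
  next
    case False
    then have "i = j" using ij by simp
    have "p (Suc j) + tail_weight (Suc j) \<le> 2 * p j"
      using p_antimono[of "Suc j" j] tail_weight_le[of "Suc j" j] ij by simp
    then show ?thesis
      using tail_weight_Suc[of j] a_pos \<open>i = j\<close> mult_left_mono[of _ "2 * p j" a] by auto
  qed
  ultimately show ?thesis
    using p_nonneg[of i] by (auto simp: algebra_simps)
qed

lemma summable_tail_weight: "summable tail_weight"
proof -
  have "summable (\<lambda>n. tail_weight (n + Suc r))"
  proof (rule summable_comparison_test')
    show "summable (\<lambda>n. p (n + r))"
      using summable_p by simp
    show "norm (tail_weight (n + Suc r)) \<le> p (n + r)" for n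
      using tail_weight_nonneg tail_weight_le[of "n + Suc r" "n + r"] by simp
  qed
  then show ?thesis
    by (rule summable_iff_shift[THEN iffD1])
qed

lemma tail_weight_tendsto_0: "tail_weight \<longlonglongrightarrow> 0"
  using summable_LIMSEQ_zero[OF summable_tail_weight] .

text \<open>For \<open>a = 1\<close>, summing \<open>tail_weight j = (\<Sum>n>j. p n)\<close> over \<open>j\<close> counts \<open>p n\<close> exactly \<open>n\<close> times.\<close>
lemma summable_index_mult_p:
  assumes "a = 1"
  shows "summable (\<lambda>n. real n * p n)"
proof (rule bounded_imp_summable)
  show "0 \<le> real n * p n" for n
    using p_nonneg by simp
  fix N
  have segment: "(\<Sum>n\<in>{Suc j..N}. p n) \<le> tail_weight j" for j
  proof -
    have "(\<Sum>n\<in>{Suc j..N}. p n) = (\<Sum>k\<in>{0..<Suc N - Suc j}. p (j + 1 + k))"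
      using sum.atLeastLessThan_shift_0[of p "Suc j" "Suc N"]
      by (simp add: atLeastLessThanSuc_atLeastAtMost comp_def)
    also have "\<dots> \<le> (\<Sum>k. p (j + 1 + k))"
      by (intro sum_le_suminf summable_p_shift) (auto simp: p_nonneg)
    also have "\<dots> = tail_weight j"
      unfolding tail_weight_def using assms by simp
    finally show ?thesis .
  qed
  have "(\<Sum>n\<le>N. real n * p n) = (\<Sum>n\<le>N. \<Sum>j<n. p n)"
    by simp
  also have "\<dots> = (\<Sum>j<N. \<Sum>n\<in>{Suc j..N}. p n)"
    by (rule sum.nested_swap')
  also have "\<dots> \<le> (\<Sum>j<N. tail_weight j)"
    by (intro sum_mono segment)
  also have "\<dots> \<le> suminf tail_weight"
    using summable_tail_weight tail_weight_nonneg by (intro sum_le_suminf) auto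
  finally show "(\<Sum>n\<le>N. real n * p n) \<le> suminf tail_weight" .
qed

lemma summable_tail_cost_series: "summable (\<lambda>k. p (j + 1 + k) * \<phi> (d + 1 + k))"
proof -
  consider "a < 1" | "a = 1" | "1 < a"
    by linarith
  then show ?thesis
  proof cases
    case 1
    show ?thesis
    proof (rule summable_comparison_test'[OF summable_p_shift[of "j + 1"]])
      fix k
      have "\<bar>\<phi> (d + 1 + k)\<bar> \<le> 1"
        using len_cost_bounds[OF a_pos 1, of "d + 1 + k"] by linarith
      then show "norm (p (j + 1 + k) * \<phi> (d + 1 + k)) \<le> p (j + 1 + k)"
        using p_nonneg[of "j + 1 + k"] by (simp add: abs_mult mult_left_le)
    qed
  next
    case 2
    have "summable (\<lambda>k. real d * p (j + 1 + k) + real (k + (j + 1)) * p (k + (j + 1)))"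
      using summable_iff_shift[where f = "\<lambda>n. real n * p n" and k = "j + 1"]
        summable_index_mult_p[OF 2] summable_p_shift[of "j + 1"]
      by (intro summable_add summable_mult) auto
    then show ?thesis
    proof (rule summable_comparison_test')
      show "norm (p (j + 1 + k) * \<phi> (d + 1 + k))
            \<le> real d * p (j + 1 + k) + real (k + (j + 1)) * p (k + (j + 1))" for k
        using 2 p_nonneg[of "j + 1 + k"] by (simp add: len_cost_def algebra_simps mult_left_mono)
    qed
  next
    case 3
    have "summable (\<lambda>k. a ^ d * (p (j + 1 + k) * a ^ (k + 1)))"
      by (intro summable_mult summable_tail_weight_series)
    then show ?thesis
      using 3 by (simp add: len_cost_def power_add ac_simps)
  qed
qed

lemma tail_cost_Suc: "tail_cost j d = p (Suc j) * \<phi> (Suc d) + tail_cost (Suc j) (Suc d)"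
  unfolding tail_cost_def using suminf_split_head[OF summable_tail_cost_series, of j d]
  by (simp add: ac_simps)

lemma tail_cost_mono: "d \<le> d' \<Longrightarrow> tail_cost j d \<le> tail_cost j d'"
  unfolding tail_cost_def
  using summable_tail_cost_series p_nonneg monoD[OF len_cost_mono[OF a_pos]]
  by (intro suminf_le mult_left_mono) auto

lemma tail_cost_eq: "tail_cost j d = tail_cost j 0 + tail_weight j * (\<phi> d - \<phi> 0)"
proof -
  have "tail_cost j d - tail_cost j 0
        = (\<Sum>k. p (j + 1 + k) * \<phi> (d + 1 + k) - p (j + 1 + k) * \<phi> (0 + 1 + k))"
    unfolding tail_cost_def by (intro suminf_diff summable_tail_cost_series)
  also have "\<dots> = (\<Sum>k. p (j + 1 + k) * a ^ (k + 1) * (\<phi> d - \<phi> 0))"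
  proof (rule suminf_cong)
    fix k
    have "\<phi> (d + 1 + k) - \<phi> (0 + 1 + k) = a ^ (k + 1) * (\<phi> d - \<phi> 0)"
      using len_cost_shift[of a d "k + 1"] by (simp add: ac_simps)
    then show "p (j + 1 + k) * \<phi> (d + 1 + k) - p (j + 1 + k) * \<phi> (0 + 1 + k)
               = p (j + 1 + k) * a ^ (k + 1) * (\<phi> d - \<phi> 0)"
      by (metis mult.assoc right_diff_distrib)
  qed
  also have "\<dots> = tail_weight j * (\<phi> d - \<phi> 0)"
    unfolding tail_weight_def by (intro suminf_mult2[symmetric] summable_tail_weight_series)
  finally show ?thesis
    by simp
qed

lemma tail_cost_nonpos: "a < 1 \<Longrightarrow> tail_cost j d \<le> 0"
proof -
  assume "a < 1"
  then have "tail_cost j d \<le> (\<Sum>k::nat. 0)"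
    unfolding tail_cost_def using summable_tail_cost_series len_cost_bounds[OF a_pos] p_nonneg
    by (intro suminf_le) (auto simp: mult_nonneg_nonpos)
  then show ?thesis
    by simp
qed

lemma tail_cost_0_tendsto_0:
  assumes "1 \<le> a"
  shows "(\<lambda>j. tail_cost j 0) \<longlonglongrightarrow> 0"
proof (rule tendsto_sandwich)
  let ?g = "\<lambda>k. p (0 + 1 + k) * \<phi> (0 + 1 + k)"
  show "eventually (\<lambda>j. 0 \<le> tail_cost j 0) sequentially"
    unfolding tail_cost_def using p_nonneg len_cost_nonneg[OF assms]
    by (intro always_eventually allI suminf_nonneg summable_tail_cost_series) auto
  show "eventually (\<lambda>j. tail_cost j 0 \<le> (\<Sum>k. ?g (k + j))) sequentially"
  proof (intro always_eventually allI)
    fix j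
    have "p (j + 1 + k) * \<phi> (0 + 1 + k) \<le> ?g (k + j)" for k
      using mult_left_mono[OF monoD[OF len_cost_mono[OF a_pos], of "0 + 1 + k" "0 + 1 + (k + j)"]
          p_nonneg[of "j + 1 + k"]]
      by (simp add: add_ac)
    then show "tail_cost j 0 \<le> (\<Sum>k. ?g (k + j))"
      unfolding tail_cost_def
      by (rule suminf_le[OF _ summable_tail_cost_series
            summable_iff_shift[of ?g j, THEN iffD2, OF summable_tail_cost_series[of 0 0]]])
  qed
  show "(\<lambda>j. \<Sum>k. ?g (k + j)) \<longlonglongrightarrow> 0"
    by (rule suminf_tail_tendsto_0[OF summable_tail_cost_series])
qed simp

lemma trunc_weight_nonneg: "0 \<le> trunc_weight j i"
  by (simp add: trunc_weight_def p_nonneg tail_weight_nonneg)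

lemma trunc_cost_eq_weighted_cost:
  "trunc_cost j c
     = weighted_cost (trunc_weight j) \<phi> {..Suc j} c + (tail_cost j 0 - tail_weight j * \<phi> 0)"
proof -
  have "weighted_cost (trunc_weight j) \<phi> {..Suc j} c
        = (\<Sum>i\<le>j. p i * \<phi> (length (c i))) + tail_weight j * \<phi> (length (c (Suc j)))"
    by (simp add: weighted_cost_def trunc_weight_def)
  then show ?thesis
    unfolding trunc_cost_def tail_cost_eq[of j "length (c (Suc j))"] by (simp add: algebra_simps)
qed

text \<open>Here the hypothesis enters: at level \<open>Suc j\<close> the symbol \<open>Suc j\<close> and the tail leaf
  carry the two smallest weights, so they may be made siblings and merged into the tail leaf
  of level \<open>j\<close>.\<close>
lemma trunc_cost_merge:
  assumes rj: "r \<le> j" and pf: "prefix_free_on {..Suc (Suc j)} c"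
  shows "\<exists>c'. prefix_free_on {..Suc j} c' \<and> trunc_cost j c' \<le> trunc_cost (Suc j) c"
proof -
  let ?A = "{..Suc (Suc j)}"
  have "\<exists>c1. prefix_free_on ?A c1
    \<and> weighted_cost (trunc_weight (Suc j)) \<phi> ?A c1 \<le> weighted_cost (trunc_weight (Suc j)) \<phi> ?A c
    \<and> siblings (c1 (Suc j)) (c1 (Suc (Suc j)))"
  proof (rule exists_sibling_code[OF _ _ _ _ len_cost_mono[OF a_pos] trunc_weight_nonneg _ pf])
    fix t assume "t \<in> ?A - {Suc j, Suc (Suc j)}"
    then have "t < Suc j" by auto
    then show "trunc_weight (Suc j) (Suc j) \<le> trunc_weight (Suc j) t
             \<and> trunc_weight (Suc j) (Suc (Suc j)) \<le> trunc_weight (Suc j) t"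
      using p_antimono[of "Suc j" t] tail_weight_le[of "Suc j" t] rj by (simp add: trunc_weight_def)
  qed auto
  then obtain c1 s b where pf1: "prefix_free_on ?A c1"
    and le1: "trunc_cost (Suc j) c1 \<le> trunc_cost (Suc j) c"
    and s: "c1 (Suc j) = s @ [b]" "c1 (Suc (Suc j)) = s @ [\<not> b]"
    unfolding trunc_cost_eq_weighted_cost[of "Suc j"] siblings_def by auto
  define c' where "c' = c1(Suc j := s)"
  have "prefix_free_on (?A - {Suc (Suc j)}) c'"
    unfolding c'_def using s by (intro prefix_free_on_merge_siblings[OF pf1]) auto
  moreover have "?A - {Suc (Suc j)} = {..Suc j}"
    by auto
  moreover have "trunc_cost j c' = trunc_cost (Suc j) c1"
    using tail_cost_Suc[of j "length s"] s by (simp add: trunc_cost_def c'_def)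
  ultimately show ?thesis
    using le1 by auto
qed

lemma trunc_cost_reduce:
  assumes "r \<le> j" and "prefix_free_on {..Suc j} c"
  shows "\<exists>c'. prefix_free_on {..Suc r} c' \<and> trunc_cost r c' \<le> trunc_cost j c"
  using assms
proof (induction j arbitrary: c rule: dec_induct)
  case base
  then show ?case by blast
next
  case (step j)
  obtain c1 where c1: "prefix_free_on {..Suc j} c1" "trunc_cost j c1 \<le> trunc_cost (Suc j) c"
    using trunc_cost_merge[OF step.hyps(1) step.prems] by blast
  obtain c' where "prefix_free_on {..Suc r} c'" "trunc_cost r c' \<le> trunc_cost j c1"
    using step.IH[OF c1(1)] by blast
  with c1(2) show ?case
    by (meson order_trans)
qed

lemma exists_trunc_cost_minimizer:
  obtains c0 where "prefix_free_on {..Suc r} c0" "\<And>t. t \<le> Suc r \<Longrightarrow> length (c0 t) \<le> Suc r"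
    "\<And>c. prefix_free_on {..Suc r} c \<Longrightarrow> trunc_cost r c0 \<le> trunc_cost r c"
proof -
  obtain c0 where pf: "prefix_free_on {..Suc r} c0"
    and short: "\<And>t. t \<in> {..Suc r} \<Longrightarrow> length (c0 t) < card {..Suc r}"
    and min: "\<And>c. prefix_free_on {..Suc r} c \<Longrightarrow>
       weighted_cost (trunc_weight r) \<phi> {..Suc r} c0 \<le> weighted_cost (trunc_weight r) \<phi> {..Suc r} c"
    using exists_min_weighted_cost[where A = "{..Suc r}" and w = "trunc_weight r",
        OF _ len_cost_mono[OF a_pos]] trunc_weight_nonneg
    by blast
  show thesis
  proof (rule that[OF pf])
    show "length (c0 t) \<le> Suc r" if "t \<le> Suc r" for t
      using short[of t] that by simp
    show "trunc_cost r c0 \<le> trunc_cost r c" if "prefix_free_on {..Suc r} c" for c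
      using min[OF that] unfolding trunc_cost_eq_weighted_cost by simp
  qed
qed

lemma exists_truncation:
  assumes "prefix_code c"
  shows "\<exists>c''. prefix_free_on {..Suc j} c''
           \<and> trunc_cost j c'' \<le> (\<Sum>i\<le>j. p i * \<phi> (length (c i)))
                                 + tail_cost j (Max ((\<lambda>i. length (c i)) ` {..j}))"
proof -
  define L where "L = Max ((\<lambda>i. length (c i)) ` {..j})"
  define c'' where "c'' = c(Suc j := take L (c (Suc j)))"
  have "prefix_free_on {..Suc j} c''"
    unfolding c''_def
  proof (rule prefix_free_on_truncate)
    show "prefix_free_on {..Suc j} c"
      using assms by (simp add: prefix_code_iff_prefix_free_on_UNIV prefix_free_on_def)
    fix t assume "t \<in> {..Suc j}" "t \<noteq> Suc j"
    then show "length (c t) \<le> L"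
      by (auto simp: L_def le_Suc_eq)
  qed simp
  moreover have "(\<Sum>i\<le>j. p i * \<phi> (length (c'' i))) = (\<Sum>i\<le>j. p i * \<phi> (length (c i)))"
    by (intro sum.cong) (auto simp: c''_def)
  moreover have "tail_cost j (length (c'' (Suc j))) \<le> tail_cost j L"
    by (intro tail_cost_mono) (simp add: c''_def)
  ultimately show ?thesis
    unfolding trunc_cost_def L_def by auto
qed

text \<open>For the finitely many \<open>i < N\<close> the factor \<open>\<phi> (n i)\<close> is bounded while \<open>tail_weight j \<rightarrow> 0\<close>;
  for \<open>i \<ge> N\<close> we use \<open>tail_weight j \<le> (1 + 2 * a) * p i\<close> and that \<open>p i * \<phi> (n i)\<close> is small.\<close>
lemma eventually_tail_weight_mult_small:
  assumes a: "1 \<le> a" and summable: "summable (\<lambda>i. p i * \<phi> (n i))" and e: "0 < e"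
  shows "eventually (\<lambda>j. \<forall>i\<le>j. tail_weight j * \<phi> (n i) \<le> e) sequentially"
proof -
  define C where "C = 1 + 2 * a"
  have C: "0 < C"
    using a_pos by (simp add: C_def)
  have "eventually (\<lambda>i. p i * \<phi> (n i) < e / C) sequentially"
    using order_tendstoD(2)[OF summable_LIMSEQ_zero[OF summable]] e C by simp
  then obtain N where N: "\<And>i. N \<le> i \<Longrightarrow> p i * \<phi> (n i) \<le> e / C"
    unfolding eventually_sequentially by (meson less_imp_le)
  define B where "B = (\<Sum>i<N. \<phi> (n i))"
  have B: "0 \<le> B" "\<And>i. i < N \<Longrightarrow> \<phi> (n i) \<le> B"
    unfolding B_def using len_cost_nonneg[OF a] by (auto intro: sum_nonneg member_le_sum)
  have "eventually (\<lambda>j. tail_weight j < e / (B + 1)) sequentially"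
    using order_tendstoD(2)[OF tail_weight_tendsto_0] e B(1) by simp
  then show ?thesis
    using eventually_gt_at_top[of r]
  proof eventually_elim
    case (elim j)
    show ?case
    proof (intro allI impI)
      fix i assume "i \<le> j"
      show "tail_weight j * \<phi> (n i) \<le> e"
      proof (cases "i < N")
        case True
        have "tail_weight j * \<phi> (n i) \<le> tail_weight j * (B + 1)"
          using B(2)[OF True] tail_weight_nonneg by (intro mult_left_mono) auto
        also have "\<dots> \<le> e"
          using elim(1) B(1) by (simp add: field_simps)
        finally show ?thesis .
      next
        case False
        have "tail_weight j * \<phi> (n i) \<le> C * p i * \<phi> (n i)"
          using tail_weight_le_const[OF elim(2) \<open>i \<le> j\<close>] len_cost_nonneg[OF a]
          by (intro mult_right_mono) (auto simp: C_def)
        also have "\<dots> \<le> C * (e / C)"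
          using mult_left_mono[OF N less_imp_le[OF C]] False by (simp add: mult.assoc)
        finally show ?thesis
          using C by simp
      qed
    qed
  qed
qed

lemma eventually_cost_tail_ge:
  assumes a: "a < 1" and summable: "summable (\<lambda>i. p i * \<phi> (n i))" and e: "0 < e"
  shows "eventually (\<lambda>j. - e \<le> (\<Sum>k. p (k + Suc j) * \<phi> (n (k + Suc j)))) sequentially"
proof -
  have "(\<lambda>j. \<Sum>k. p (k + Suc j)) \<longlonglongrightarrow> 0"
    using LIMSEQ_Suc[OF suminf_tail_tendsto_0[OF summable_p]] by simp
  then have "eventually (\<lambda>j. (\<Sum>k. p (k + Suc j)) < e) sequentially"
    using e by (rule order_tendstoD(2))
  then show ?thesis
  proof eventually_elim
    case (elim j)
    have "- (\<Sum>k. p (k + Suc j)) = (\<Sum>k. - p (k + Suc j))"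
      by (intro suminf_minus[symmetric] summable_iff_shift[THEN iffD2, OF summable_p])
    also have "\<dots> \<le> (\<Sum>k. p (k + Suc j) * \<phi> (n (k + Suc j)))"
    proof (rule suminf_le)
      show "- p (k + Suc j) \<le> p (k + Suc j) * \<phi> (n (k + Suc j))" for k
        using len_cost_bounds[OF a_pos a] p_nonneg mult_left_mono[of "-1"] by fastforce
      show "summable (\<lambda>k. - p (k + Suc j))"
        by (intro summable_minus summable_iff_shift[THEN iffD2, OF summable_p])
      show "summable (\<lambda>k. p (k + Suc j) * \<phi> (n (k + Suc j)))"
        by (rule summable_iff_shift[THEN iffD2, OF summable])
    qed
    finally show ?case
      using elim by linarith
  qed
qed

lemma eventually_tail_cost_Max_le:
  assumes a: "1 \<le> a" and summable: "summable (\<lambda>i. p i * \<phi> (n i))" and e: "0 < e"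
  shows "eventually (\<lambda>j. tail_cost j (Max (n ` {..j})) \<le> e) sequentially"
proof -
  have "eventually (\<lambda>j. tail_cost j 0 < e / 2) sequentially"
    using order_tendstoD(2)[OF tail_cost_0_tendsto_0[OF a], of "e / 2"] e by simp
  moreover have "eventually (\<lambda>j. \<forall>i\<le>j. tail_weight j * \<phi> (n i) \<le> e / 2) sequentially"
    using eventually_tail_weight_mult_small[OF a summable, of "e / 2"] e by linarith
  ultimately show ?thesis
  proof eventually_elim
    case (elim j)
    have "Max (n ` {..j}) \<in> n ` {..j}"
      by (intro Max_in) auto
    then obtain i where i: "i \<le> j" "Max (n ` {..j}) = n i"
      by (metis atMost_iff imageE)
    have "tail_cost j (n i) \<le> tail_cost j 0 + tail_weight j * \<phi> (n i)"
      using tail_cost_eq[of j "n i"] tail_weight_nonneg[of j] len_cost_nonneg[OF a, of 0]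
      by (simp add: right_diff_distrib)
    then show ?case
      using elim i by fastforce
  qed
qed

lemma eventually_tail_cost_le_cost_tail:
  assumes summable: "summable (\<lambda>i. p i * \<phi> (n i))" and e: "0 < e"
  shows "eventually (\<lambda>j. tail_cost j (Max (n ` {..j}))
                          \<le> (\<Sum>k. p (k + Suc j) * \<phi> (n (k + Suc j))) + e) sequentially"
proof (cases "a < 1")
  case True
  show ?thesis
    using eventually_cost_tail_ge[OF True summable e]
  proof eventually_elim
    case (elim j)
    then show ?case
      using tail_cost_nonpos[OF True, of j "Max (n ` {..j})"] by linarith
  qed
next
  case False
  then have a: "1 \<le> a" by simp
  have nonneg: "0 \<le> (\<Sum>k. p (k + Suc j) * \<phi> (n (k + Suc j)))" for j
    using p_nonneg len_cost_nonneg[OF a]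
    by (intro suminf_nonneg summable_iff_shift[THEN iffD2, OF summable]) auto
  show ?thesis
    using eventually_tail_cost_Max_le[OF a summable e]
  proof eventually_elim
    case (elim j)
    then show ?case
      using nonneg[of j] by linarith
  qed
qed

lemma exists_trunc_cost_le_exp_cost:
  assumes pc: "prefix_code c" and summable: "summable (\<lambda>i. p i * \<phi> (length (c i)))" and e: "0 < e"
  shows "\<exists>j c''. r \<le> j \<and> prefix_free_on {..Suc j} c'' \<and> trunc_cost j c'' \<le> exp_cost a p c + e"
proof -
  have "eventually (\<lambda>j. r \<le> j \<and> tail_cost j (Max ((\<lambda>i. length (c i)) ` {..j}))
          \<le> (\<Sum>k. p (k + Suc j) * \<phi> (length (c (k + Suc j)))) + e) sequentially"
    using eventually_ge_at_top[of r] eventually_tail_cost_le_cost_tail[OF summable e]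
    by eventually_elim simp
  then obtain j where j: "r \<le> j" and tail: "tail_cost j (Max ((\<lambda>i. length (c i)) ` {..j}))
          \<le> (\<Sum>k. p (k + Suc j) * \<phi> (length (c (k + Suc j)))) + e"
    unfolding eventually_sequentially by blast
  obtain c'' where c'': "prefix_free_on {..Suc j} c''"
    "trunc_cost j c''
       \<le> (\<Sum>i\<le>j. p i * \<phi> (length (c i))) + tail_cost j (Max ((\<lambda>i. length (c i)) ` {..j}))"
    using exists_truncation[OF pc] by blast
  have "exp_cost a p c
        = (\<Sum>k. p (k + Suc j) * \<phi> (length (c (k + Suc j)))) + (\<Sum>i\<le>j. p i * \<phi> (length (c i)))"
    unfolding exp_cost_def using suminf_split_initial_segment[OF summable, of "Suc j"]
    by (simp add: lessThan_Suc_atMost)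
  then show ?thesis
    using j c'' tail by (intro exI[of _ j] exI[of _ c'']) simp
qed

lemma trunc_cost_le_exp_cost:
  assumes min: "\<And>c'. prefix_free_on {..Suc r} c' \<Longrightarrow> trunc_cost r c0 \<le> trunc_cost r c'"
    and pc: "prefix_code c" and summable: "summable (\<lambda>i. p i * \<phi> (length (c i)))"
  shows "trunc_cost r c0 \<le> exp_cost a p c"
proof (rule field_le_epsilon)
  fix e :: real assume "0 < e"
  then obtain j c'' where "r \<le> j" "prefix_free_on {..Suc j} c''"
    and le: "trunc_cost j c'' \<le> exp_cost a p c + e"
    using exists_trunc_cost_le_exp_cost[OF pc summable] by blast
  then obtain c' where "prefix_free_on {..Suc r} c'" "trunc_cost r c' \<le> trunc_cost j c''"
    using trunc_cost_reduce by blast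
  then show "trunc_cost r c0 \<le> exp_cost a p c + e"
    using min le by (meson order_trans)
qed

lemma sums_trunc_cost_unary_extension:
  assumes head: "\<And>i. i \<le> r \<Longrightarrow> length (e i) = length (c i)"
    and tail: "\<And>i. r < i \<Longrightarrow> length (e i) = length (c (Suc r)) + (i - r)"
  shows "(\<lambda>i. p i * \<phi> (length (e i))) sums trunc_cost r c"
proof -
  let ?f = "\<lambda>i. p i * \<phi> (length (e i))"
  let ?m = "length (c (Suc r))"
  have "(\<lambda>k. ?f (k + Suc r)) = (\<lambda>k. p (r + 1 + k) * \<phi> (?m + 1 + k))"
    using tail by (simp add: ac_simps)
  then have "(\<lambda>k. ?f (k + Suc r)) sums tail_cost r ?m"
    unfolding tail_cost_def using summable_tail_cost_series by (simp add: summable_sums)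
  then have "?f sums (tail_cost r ?m + (\<Sum>i<Suc r. ?f i))"
    by (rule sums_iff_shift[THEN iffD1])
  moreover have "(\<Sum>i<Suc r. ?f i) = (\<Sum>i\<le>r. p i * \<phi> (length (c i)))"
    using head by (simp add: lessThan_Suc_atMost)
  ultimately show ?thesis
    by (simp add: trunc_cost_def add.commute)
qed

lemma exists_min_exp_cost_code_with_unary_tail:
  obtains c x where "prefix_code c" "summable (\<lambda>i. p i * \<phi> (length (c i)))"
    "\<And>c'. prefix_code c' \<Longrightarrow> summable (\<lambda>i. p i * \<phi> (length (c' i))) \<Longrightarrow>
            exp_cost a p c \<le> exp_cost a p c'"
    "\<And>j. r < j \<Longrightarrow> c j = replicate (j - x) True @ [False]"
proof -
  obtain c0 where pf0: "prefix_free_on {..Suc r} c0" and short: "length (c0 (Suc r)) \<le> Suc r"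
    and min: "\<And>c. prefix_free_on {..Suc r} c \<Longrightarrow> trunc_cost r c0 \<le> trunc_cost r c"
    using exists_trunc_cost_minimizer by (metis order_refl)
  define m where "m = length (c0 (Suc r))"
  define c1 where "c1 = flip_along (c0 (Suc r)) \<circ> c0"
    \<comment> \<open>relabelled so that the tail leaf is \<open>1\<dots>1\<close>; \<open>m \<le> Suc r\<close> makes \<open>x = Suc r - m\<close> work\<close>
  define e where "e i = (if i \<le> r then c1 i else replicate (m + (i - Suc r)) True @ [False])" for i
  have pf1: "prefix_free_on {..Suc r} c1"
    unfolding c1_def by (rule prefix_free_on_flip_along[OF pf0])
  have "c1 (Suc r) = replicate m True"
    by (simp add: c1_def m_def flip_along_self)
  then have pc: "prefix_code e"
    unfolding e_def by (rule prefix_code_unary_extension[OF pf1])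
  have sums: "(\<lambda>i. p i * \<phi> (length (e i))) sums trunc_cost r c0"
    by (rule sums_trunc_cost_unary_extension) (auto simp: e_def c1_def m_def)
  show thesis
  proof (rule that[of e "Suc r - m"])
    show "prefix_code e" by (fact pc)
    show "summable (\<lambda>i. p i * \<phi> (length (e i)))"
      using sums by (rule sums_summable)
    show "exp_cost a p e \<le> exp_cost a p c'"
      if "prefix_code c'" "summable (\<lambda>i. p i * \<phi> (length (c' i)))" for c'
      using trunc_cost_le_exp_cost[OF min that] sums by (simp add: exp_cost_def sums_iff)
    show "e j = replicate (j - (Suc r - m)) True @ [False]" if "r < j" for j
      using that short by (simp add: e_def m_def)
  qed
qed

end

theorem theorem2:
  fixes p :: "nat \<Rightarrow> real" and a :: real and r :: nat
  assumes ppos: "\<And>i. p i > 0"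
    and psum: "p sums 1"
    and apos: "a > 0"
    and cond: "\<And>i j. r < j \<Longrightarrow> i < j \<Longrightarrow>
        p i \<ge> p j \<and> ennreal (p i) \<ge> (\<Sum>k. ennreal (p (j + 1 + k) * a ^ (k + 1)))"
  shows "\<exists>c x. min_penalty_code a p c \<and>
           (\<forall>j. r < j \<longrightarrow> c j = replicate (j - x) True @ [False])"
proof -
  interpret unary_tail_setting p a r
    by (rule unary_tail_setting.intro[OF ppos psum apos cond])
  obtain c x where pc: "prefix_code c"
    and summable: "summable (\<lambda>i. p i * len_cost a (length (c i)))"
    and min: "\<And>c'. prefix_code c' \<Longrightarrow> summable (\<lambda>i. p i * len_cost a (length (c' i))) \<Longrightarrow>
                exp_cost a p c \<le> exp_cost a p c'"
    and unary: "\<And>j. r < j \<Longrightarrow> c j = replicate (j - x) True @ [False]"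
    using exists_min_exp_cost_code_with_unary_tail by blast
  have "min_penalty_code a p c"
    using min_penalty_code_if_min_exp_cost[OF ppos summable_p apos pc summable min] .
  with unary show ?thesis
    by blast
qed

end
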